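(* The set $\{\beta^k G^{(\beta)}_a : k\in\mathbb{Z}_{\ge0},\ a \text{ a composition with } \ell(a)\le n\}$ (including the empty composition) is a $\mathbb{Z}$-basis of $\mathrm{QSym}_n[\beta]$. Consequently $\{G^{(-1)}_a : \ell(a)\le n\}$ is a $\mathbb{Z}$-basis of $\mathrm{QSym}_n$.
   Context: $\mathrm{QSym}_n\subseteq\mathbb{Z}[x_1,\dots,x_n]$ is the subring of quasisymmetric polynomials: those in which the coefficients of $x_{i_1}^{e_1}\cdots x_{i_k}^{e_k}$ and $x_{j_1}^{e_1}\cdots x_{j_k}^{e_k}$ agree for all $i_1<\dots<i_k$ and $j_1<\dots<j_k$; $\mathrm{QSym}_n[\beta]$ is polynomials in formal $\beta$ with coefficients in it. Compositions have positive entries; $\ell(a)$ is the length; $0^m a$ prepends $m$ zeros. Glides: a weak komposition is a weak composition whose positive entries are colored black or red, $\mathrm{ex}$ = number of red entries, $\mathtt{flat}$ = nonzero entries. For a weak composition $a'$ of length $n$ with nonzero entries exactly at $n_1<\dots<n_\ell$, a weak komposition $b$ of length $n$ is a glide of $a'$ if there exist $0=i_0<\dots<i_\ell$ with $i_j\le n_j$, $b_k=0$ for $k>i_\ell$, and for each $j$: $b_{i_{j-1}+1}+\dots+b_{i_j}=\mathtt{flat}(a')_j+\#\{\text{red entries among them}\}$ and the first nonzero entry among them is black. $\mathcal{G}^{(\beta)}_{a'}=\sum_b\beta^{\mathrm{ex}(b)}x^b$ over glides $b$ of $a'$. For a composition $a$ with $\ell(a)\le n$, $G^{(\beta)}_a(x_1,\dots,x_n)=\mathcal{G}^{(\beta)}_{0^{n-\ell(a)}a}$.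 *)

theory Defs
  imports Main
begin

text \<open>Polynomials in \<open>\<int>[\<beta>][x_1,...,x_n]\<close> are represented as integer-valued
  coefficient functions on monomials \<open>(k, b)\<close> standing for \<open>\<beta>^k x^b\<close>, where the
  exponent vector \<open>b\<close> is a list of length \<open>n\<close> (variable \<open>x_(t+1)\<close> has exponent \<open>b ! t\<close>).
  Polynomials in \<open>\<int>[x_1,...,x_n]\<close> are coefficient functions on exponent lists.\<close>

type_synonym bpoly = "nat \<times> nat list \<Rightarrow> int"
type_synonym xpoly = "nat list \<Rightarrow> int"

text \<open>Exponent vector of the monomial \<open>x_{i_1}^{e_1}\<cdots>x_{i_k}^{e_k}\<close> (0-indexed variables).\<close>
definition expvec :: "nat \<Rightarrow> nat list \<Rightarrow> nat list \<Rightarrow> nat list" where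
  "expvec n i e = map (\<lambda>m. \<Sum>t<length i. if i ! t = m then e ! t else 0) [0..<n]"

definition qsym_cond :: "nat \<Rightarrow> (nat list \<Rightarrow> int) \<Rightarrow> bool" where
  "qsym_cond n p \<longleftrightarrow>
     (\<forall>e i j. length i = length e \<and> length j = length e \<and>
        sorted_wrt (<) i \<and> sorted_wrt (<) j \<and> set i \<subseteq> {..<n} \<and> set j \<subseteq> {..<n} \<and>
        (\<forall>x\<in>set e. 0 < x)
        \<longrightarrow> p (expvec n i e) = p (expvec n j e))"

definition QSym :: "nat \<Rightarrow> xpoly set" where
  "QSym n = {p. finite {b. p b \<noteq> 0} \<and> (\<forall>b. p b \<noteq> 0 \<longrightarrow> length b = n) \<and> qsym_cond n p}"

definition QSymB :: "nat \<Rightarrow> bpoly set" where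
  "QSymB n = {p. finite {m. p m \<noteq> 0} \<and> (\<forall>k b. p (k, b) \<noteq> 0 \<longrightarrow> length b = n) \<and>
                 (\<forall>k. qsym_cond n (\<lambda>b. p (k, b)))}"

definition composition :: "nat list \<Rightarrow> bool" where
  "composition a \<longleftrightarrow> (\<forall>x\<in>set a. 0 < x)"

definition flat :: "nat list \<Rightarrow> nat list" where
  "flat a = filter (\<lambda>x. x \<noteq> 0) a"

text \<open>1-indexed positions \<open>n_1 < ... < n_\<ell>\<close> of the nonzero entries.\<close>
definition nzpos :: "nat list \<Rightarrow> nat list" where
  "nzpos a = filter (\<lambda>k. a ! (k - 1) \<noteq> 0) [1..<length a + 1]"

text \<open>A weak komposition of length \<open>n\<close> is a pair \<open>(b, red)\<close> of lists of length \<open>n\<close>;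
  \<open>red ! t\<close> says that entry \<open>t\<close> is colored red (only positive entries may be red).
  Positions in the glide definition are 1-indexed, so entry \<open>k\<close> is \<open>b ! (k - 1)\<close>.\<close>
definition glide :: "nat list \<Rightarrow> nat list \<Rightarrow> bool list \<Rightarrow> bool" where
  "glide a' b red \<longleftrightarrow>
     (let n = length a'; l = length (nzpos a') in
      length b = n \<and> length red = n \<and> (\<forall>t<n. red ! t \<longrightarrow> 0 < b ! t) \<and>
      (\<exists>\<iota>::nat \<Rightarrow> nat. \<iota> 0 = 0 \<and> (\<forall>j<l. \<iota> j < \<iota> (Suc j)) \<and>
         (\<forall>j\<in>{1..l}. \<iota> j \<le> nzpos a' ! (j - 1)) \<and>
         (\<forall>k. \<iota> l < k \<and> k \<le> n \<longrightarrow> b ! (k - 1) = 0) \<and>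
         (\<forall>j\<in>{1..l}.
            (\<Sum>k\<in>{\<iota> (j - 1)<..\<iota> j}. b ! (k - 1))
              = flat a' ! (j - 1) + card {k\<in>{\<iota> (j - 1)<..\<iota> j}. red ! (k - 1)} \<and>
            (\<exists>m\<in>{\<iota> (j - 1)<..\<iota> j}. b ! (m - 1) \<noteq> 0 \<and> \<not> red ! (m - 1) \<and>
               (\<forall>k\<in>{\<iota> (j - 1)<..<m}. b ! (k - 1) = 0)))))"

definition ex :: "bool list \<Rightarrow> nat" where
  "ex red = length (filter id red)"

text \<open>\<open>\<G>^{(\<beta>)}_{a'} = \<Sum>_b \<beta>^{ex(b)} x^b\<close>: the coefficient of \<open>\<beta>^k x^b\<close> counts the glides
  with underlying weak composition \<open>b\<close> and \<open>k\<close> red entries.\<close>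
definition calG :: "nat list \<Rightarrow> bpoly" where
  "calG a' = (\<lambda>(k, b). int (card {red. glide a' b red \<and> ex red = k}))"

definition Gb :: "nat \<Rightarrow> nat list \<Rightarrow> bpoly" where
  "Gb n a = calG (replicate (n - length a) 0 @ a)"

definition beta_pow_mult :: "nat \<Rightarrow> bpoly \<Rightarrow> bpoly" where
  "beta_pow_mult k p = (\<lambda>(k', b). if k \<le> k' then p (k' - k, b) else 0)"

definition spec_neg1 :: "bpoly \<Rightarrow> xpoly" where
  "spec_neg1 p = (\<lambda>b. \<Sum>k\<in>{k. p (k, b) \<noteq> 0}. (-1) ^ k * p (k, b))"

definition lincomb :: "('i \<Rightarrow> int) \<Rightarrow> ('i \<Rightarrow> 'm \<Rightarrow> int) \<Rightarrow> 'm \<Rightarrow> int" where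
  "lincomb c v = (\<lambda>m. \<Sum>i\<in>{i. c i \<noteq> 0}. c i * v i m)"

definition Z_basis :: "'i set \<Rightarrow> ('i \<Rightarrow> 'm \<Rightarrow> int) \<Rightarrow> ('m \<Rightarrow> int) set \<Rightarrow> bool" where
  "Z_basis I v S \<longleftrightarrow>
     (\<forall>i\<in>I. v i \<in> S) \<and>
     (\<forall>c. finite {i. c i \<noteq> 0} \<and> {i. c i \<noteq> 0} \<subseteq> I \<and> lincomb c v = (\<lambda>_. 0) \<longrightarrow> (\<forall>i. c i = 0)) \<and>
     (\<forall>p\<in>S. \<exists>c. finite {i. c i \<noteq> 0} \<and> {i. c i \<noteq> 0} \<subseteq> I \<and> lincomb c v = p)"

end

theory Submission
  imports Defs
begin

text \<open>The coefficient of \<open>\<beta>^k x^b\<close> in \<open>G_a\<close> counts the ways of cutting the word of nonzero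
  entries of \<open>b\<close>, with its red/black colouring, into consecutive blocks, one for each part of
  \<open>a\<close>: a block starts with a black letter and its letters sum to the part plus the number of
  its red letters. This count depends only on \<open>flat b\<close> and \<open>k\<close>, so \<open>G_a\<close> is quasisymmetric.
  A factorization has at least as many letters as blocks, and exactly as many only when
  \<open>flat b = a\<close> and \<open>k = 0\<close>, where it is unique. Thus, in terms of the monomial basis of
  \<open>QSym_n[\<beta>]\<close> indexed by \<open>(k, flat b)\<close>, the family \<open>\<beta>^k G_a\<close> is unitriangular for the
  order by length of the composition, and unitriangular families are \<open>\<int>\<close>-bases. Setting
  \<open>\<beta> = -1\<close> keeps the diagonal coefficient \<open>1\<close>, so the same argument applies in \<open>QSym_n\<close>.\<close>

section \<open>Unitriangular families of finitely supported functions\<close>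

text \<open>\<open>QSym_n\<close> and \<open>QSym_n[\<beta>]\<close> are of this form, with \<open>\<kappa>\<close> forgetting the zero entries of
  exponent vectors.\<close>
definition fibre_constant_fns :: "'m set \<Rightarrow> ('m \<Rightarrow> 'i) \<Rightarrow> ('m \<Rightarrow> int) set" where
  "fibre_constant_fns D \<kappa> = {p. finite {m. p m \<noteq> 0} \<and> (\<forall>m. p m \<noteq> 0 \<longrightarrow> m \<in> D) \<and>
     (\<forall>m\<in>D. \<forall>m'\<in>D. \<kappa> m = \<kappa> m' \<longrightarrow> p m = p m')}"

lemma fibre_constant_fnsD:
  assumes "p \<in> fibre_constant_fns D \<kappa>"
  shows "finite {m. p m \<noteq> 0}" and "p m \<noteq> 0 \<Longrightarrow> m \<in> D"
    and "m \<in> D \<Longrightarrow> m' \<in> D \<Longrightarrow> \<kappa> m = \<kappa> m' \<Longrightarrow> p m = p m'"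
  using assms unfolding fibre_constant_fns_def by blast+

lemma fibre_constant_fns_diff:
  assumes p: "p \<in> fibre_constant_fns D \<kappa>" and q: "q \<in> fibre_constant_fns D \<kappa>"
  shows "(\<lambda>m. p m - q m) \<in> fibre_constant_fns D \<kappa>"
proof -
  have "{m. p m - q m \<noteq> 0} \<subseteq> {m. p m \<noteq> 0} \<union> {m. q m \<noteq> 0}" by auto
  then have "finite {m. p m - q m \<noteq> 0}"
    using fibre_constant_fnsD(1)[OF p] fibre_constant_fnsD(1)[OF q]
    by (rule finite_subset[OF _ finite_UnI])
  moreover have "m \<in> D" if "p m - q m \<noteq> 0" for m
    using that fibre_constant_fnsD(2)[OF p] fibre_constant_fnsD(2)[OF q] by force
  moreover have "p m - q m = p m' - q m'" if "m \<in> D" "m' \<in> D" "\<kappa> m = \<kappa> m'" for m m'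
    using fibre_constant_fnsD(3)[OF p that] fibre_constant_fnsD(3)[OF q that] by simp
  ultimately show ?thesis unfolding fibre_constant_fns_def by blast
qed

lemma lincomb_eq_sum:
  assumes "finite A" "{i. c i \<noteq> 0} \<subseteq> A"
  shows "lincomb c v m = (\<Sum>i\<in>A. c i * v i m)"
  unfolding lincomb_def by (rule sum.mono_neutral_left) (use assms in auto)

lemma lincomb_add:
  assumes "finite {i. c i \<noteq> 0}" "finite {i. c' i \<noteq> 0}"
  shows "lincomb (\<lambda>i. c i + c' i) v m = lincomb c v m + lincomb c' v m"
proof -
  let ?A = "{i. c i \<noteq> 0} \<union> {i. c' i \<noteq> 0}"
  have "finite ?A" using assms by simp
  moreover have "{i. c i + c' i \<noteq> 0} \<subseteq> ?A" by auto
  ultimately show ?thesis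
    by (simp add: lincomb_eq_sum[of ?A] distrib_right sum.distrib)
qed

lemma lincomb_in_fibre_constant_fns:
  assumes "finite {i. c i \<noteq> 0}" and "\<And>i. c i \<noteq> 0 \<Longrightarrow> v i \<in> fibre_constant_fns D \<kappa>"
  shows "lincomb c v \<in> fibre_constant_fns D \<kappa>"
proof -
  let ?C = "{i. c i \<noteq> 0}"
  have supp: "{m. lincomb c v m \<noteq> 0} \<subseteq> (\<Union>i\<in>?C. {m. v i m \<noteq> 0})"
    unfolding lincomb_def by (force intro: sum.neutral)
  show ?thesis
    unfolding fibre_constant_fns_def
  proof (intro CollectI conjI allI impI ballI)
    show "finite {m. lincomb c v m \<noteq> 0}"
      using assms fibre_constant_fnsD(1) by (intro finite_subset[OF supp] finite_UN_I) auto
    show "m \<in> D" if nz: "lincomb c v m \<noteq> 0" for m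
    proof -
      obtain i where "c i \<noteq> 0" "v i m \<noteq> 0" using supp nz by blast
      then show ?thesis using fibre_constant_fnsD(2)[OF assms(2)] by blast
    qed
    show "lincomb c v m = lincomb c v m'" if "m \<in> D" "m' \<in> D" "\<kappa> m = \<kappa> m'" for m m'
      unfolding lincomb_def using fibre_constant_fnsD(3)[OF assms(2) that] by (intro sum.cong) auto
  qed
qed

text \<open>The matrix of \<open>v\<close> with respect to the indicator functions of the fibres of \<open>\<kappa>\<close>,
  ordered by \<open>rank\<close>, is unitriangular; \<open>rep i\<close> is a point of the fibre indexed by \<open>i\<close>.\<close>
locale unitriangular_family =
  fixes I :: "'i set" and v :: "'i \<Rightarrow> 'm \<Rightarrow> int" and D :: "'m set" and \<kappa> :: "'m \<Rightarrow> 'i"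
    and rank :: "'i \<Rightarrow> nat" and rep :: "'i \<Rightarrow> 'm" and N :: nat
  assumes \<kappa>_in: "m \<in> D \<Longrightarrow> \<kappa> m \<in> I"
    and rep_in: "i \<in> I \<Longrightarrow> rep i \<in> D"
    and \<kappa>_rep: "i \<in> I \<Longrightarrow> \<kappa> (rep i) = i"
    and v_in: "i \<in> I \<Longrightarrow> v i \<in> fibre_constant_fns D \<kappa>"
    and v_rep: "i \<in> I \<Longrightarrow> v i (rep i) = 1"
    and v_triangular: "i \<in> I \<Longrightarrow> v i m \<noteq> 0 \<Longrightarrow> \<kappa> m \<noteq> i \<Longrightarrow> rank i < rank (\<kappa> m)"
    and rank_le: "i \<in> I \<Longrightarrow> rank i \<le> N"
begin

abbreviation S where "S \<equiv> fibre_constant_fns D \<kappa>"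

lemma lincomb_eval_low_rank:
  assumes c: "finite {i. c i \<noteq> 0}" "{i. c i \<noteq> 0} \<subseteq> I" and m: "m \<in> D"
    and low: "\<And>i. c i \<noteq> 0 \<Longrightarrow> rank (\<kappa> m) \<le> rank i"
  shows "lincomb c v m = c (\<kappa> m)"
proof -
  have "c i * v i m = (if i = \<kappa> m then c i else 0)" if "c i \<noteq> 0" for i
  proof (cases "i = \<kappa> m")
    case True
    with c(2) that have "i \<in> I" by auto
    with True m have "v i m = v i (rep i)"
      using fibre_constant_fnsD(3)[OF v_in] rep_in \<kappa>_rep by metis
    with True \<open>i \<in> I\<close> show ?thesis by (simp add: v_rep)
  next
    case False
    with c(2) that low[OF that] v_triangular[of i m] have "v i m = 0" by force
    with False show ?thesis by simp
  qed
  then have "lincomb c v m = (\<Sum>i\<in>{i. c i \<noteq> 0}. if i = \<kappa> m then c i else 0)"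
    unfolding lincomb_def by (intro sum.cong) auto
  also have "\<dots> = c (\<kappa> m)" using c(1) by (simp add: sum.delta')
  finally show ?thesis .
qed

lemma independent:
  assumes "finite {i. c i \<noteq> 0}" "{i. c i \<noteq> 0} \<subseteq> I" "lincomb c v = (\<lambda>_. 0)"
  shows "c i = 0"
proof (rule ccontr)
  assume "c i \<noteq> 0"
  then obtain i0 where ci0: "c i0 \<noteq> 0" and min: "\<And>j. c j \<noteq> 0 \<Longrightarrow> rank i0 \<le> rank j"
    using ex_has_least_nat[of "\<lambda>i. c i \<noteq> 0" i rank] by blast
  then have "i0 \<in> I" using assms(2) by auto
  then have "lincomb c v (rep i0) = c i0"
    using lincomb_eval_low_rank[OF assms(1,2) rep_in] min \<kappa>_rep by simp
  with assms(3) ci0 show False by simp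
qed

text \<open>The coefficients of the lowest rank part of \<open>p\<close> are read off at the representatives.\<close>
lemma reduce_lowest_rank:
  assumes p: "p \<in> S" and above: "\<And>m. p m \<noteq> 0 \<Longrightarrow> d \<le> rank (\<kappa> m)"
  obtains c where "finite {i. c i \<noteq> 0}" "{i. c i \<noteq> 0} \<subseteq> I"
    "(\<lambda>m. p m - lincomb c v m) \<in> S"
    "\<And>m. p m - lincomb c v m \<noteq> 0 \<Longrightarrow> Suc d \<le> rank (\<kappa> m)"
proof
  define F where "F = \<kappa> ` {m. p m \<noteq> 0 \<and> rank (\<kappa> m) = d}"
  define c where "c i = (if i \<in> F then p (rep i) else 0)" for i
  have F: "finite F" "F \<subseteq> I"
    using fibre_constant_fnsD[OF p] \<kappa>_in unfolding F_def by auto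
  show c_fin: "finite {i. c i \<noteq> 0}" and c_I: "{i. c i \<noteq> 0} \<subseteq> I"
    using F unfolding c_def by (auto intro: finite_subset)
  show q: "(\<lambda>m. p m - lincomb c v m) \<in> S"
    using c_fin c_I v_in by (intro fibre_constant_fns_diff[OF p] lincomb_in_fibre_constant_fns) auto
  fix m assume qm: "p m - lincomb c v m \<noteq> 0"
  show "Suc d \<le> rank (\<kappa> m)"
  proof (rule ccontr)
    assume "\<not> Suc d \<le> rank (\<kappa> m)"
    then have low: "rank (\<kappa> m) \<le> d" by simp
    have m: "m \<in> D" using fibre_constant_fnsD(2)[OF q qm] .
    have "c i \<noteq> 0 \<Longrightarrow> rank (\<kappa> m) \<le> rank i" for i
      using low unfolding c_def F_def by (auto split: if_splits)
    then have "lincomb c v m = c (\<kappa> m)"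
      using lincomb_eval_low_rank[OF c_fin c_I m] by blast
    also have "c (\<kappa> m) = p m"
    proof (cases "\<kappa> m \<in> F")
      case True
      then show ?thesis
        using fibre_constant_fnsD(3)[OF p rep_in m] \<kappa>_rep F(2) by (auto simp: c_def)
    next
      case False
      then have "p m = 0" using above[of m] low unfolding F_def by force
      with False show ?thesis by (simp add: c_def)
    qed
    finally show False using qm by simp
  qed
qed

lemma span_from_rank:
  assumes "p \<in> S" "\<And>m. p m \<noteq> 0 \<Longrightarrow> d \<le> rank (\<kappa> m)"
  shows "\<exists>c. finite {i. c i \<noteq> 0} \<and> {i. c i \<noteq> 0} \<subseteq> I \<and> lincomb c v = p"
  using assms
proof (induction "Suc N - d" arbitrary: p d)
  case 0
  have "p = (\<lambda>_. 0)"
  proof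
    fix m show "p m = 0"
      using "0" rank_le[OF \<kappa>_in[OF fibre_constant_fnsD(2)[OF "0.prems"(1)]]] by fastforce
  qed
  then show ?case by (intro exI[of _ "\<lambda>_. 0"]) (simp add: lincomb_def)
next
  case (Suc t)
  obtain c where c: "finite {i. c i \<noteq> 0}" "{i. c i \<noteq> 0} \<subseteq> I"
    and q: "(\<lambda>m. p m - lincomb c v m) \<in> S"
      "\<And>m. p m - lincomb c v m \<noteq> 0 \<Longrightarrow> Suc d \<le> rank (\<kappa> m)"
    using reduce_lowest_rank[OF Suc.prems] by blast
  obtain c' where c': "finite {i. c' i \<noteq> 0}" "{i. c' i \<noteq> 0} \<subseteq> I"
    "lincomb c' v = (\<lambda>m. p m - lincomb c v m)"
    using Suc.hyps(1)[of "Suc d"] Suc.hyps(2) q by fastforce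
  have "finite {i. c i + c' i \<noteq> 0}"
    using c(1) c'(1) by (auto intro: finite_subset[of _ "{i. c i \<noteq> 0} \<union> {i. c' i \<noteq> 0}"])
  moreover have "{i. c i + c' i \<noteq> 0} \<subseteq> I" using c(2) c'(2) by force
  moreover have "lincomb (\<lambda>i. c i + c' i) v = p"
    using lincomb_add[OF c(1) c'(1), of v] c'(3) by (simp add: fun_eq_iff)
  ultimately show ?case by (intro exI[of _ "\<lambda>i. c i + c' i"]) blast
qed

theorem Z_basis: "Z_basis I v S"
  unfolding Z_basis_def using v_in independent span_from_rank[of _ 0] by blast

end

section \<open>Block factorizations of coloured words\<close>

definition weight :: "(nat \<times> bool) list \<Rightarrow> nat" where
  "weight w = sum_list (map fst w)"

definition reds :: "(nat \<times> bool) list \<Rightarrow> nat" where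
  "reds w = length (filter snd w)"

definition block :: "nat \<Rightarrow> (nat \<times> bool) list \<Rightarrow> bool" where
  "block x u \<longleftrightarrow> u \<noteq> [] \<and> \<not> snd (hd u) \<and> weight u = x + reds u"

fun splits_into_blocks :: "nat list \<Rightarrow> (nat \<times> bool) list \<Rightarrow> bool" where
  "splits_into_blocks [] w \<longleftrightarrow> w = []"
| "splits_into_blocks (x # a) w \<longleftrightarrow> (\<exists>u v. w = u @ v \<and> block x u \<and> splits_into_blocks a v)"

definition glide_count :: "nat list \<Rightarrow> nat list \<Rightarrow> nat \<Rightarrow> nat" where
  "glide_count a e k = card {w. splits_into_blocks a w \<and> map fst w = e \<and> reds w = k}"

lemma reds_append [simp]: "reds (u @ v) = reds u + reds v"
  by (simp add: reds_def)

lemma block_length: "block x u \<Longrightarrow> Suc (reds u) \<le> length u"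
  by (cases u) (auto simp: block_def reds_def)

lemma splits_into_blocks_length: "splits_into_blocks a w \<Longrightarrow> length a + reds w \<le> length w"
proof (induction a arbitrary: w)
  case (Cons x a)
  then obtain u v where "w = u @ v" "block x u" "splits_into_blocks a v" by auto
  with Cons.IH[of v] block_length[of x u] show ?case by simp
qed (simp add: reds_def)

lemma splits_into_blocks_weight: "splits_into_blocks a w \<Longrightarrow> weight w = sum_list a + reds w"
  by (induction a arbitrary: w) (auto simp: block_def weight_def reds_def)

lemma splits_into_blocks_tight:
  "splits_into_blocks a w \<Longrightarrow> length w = length a \<Longrightarrow> reds w = 0 \<Longrightarrow> w = map (\<lambda>x. (x, False)) a"
proof (induction a arbitrary: w)
  case (Cons x a)
  then obtain u v where uv: "w = u @ v" "block x u" "splits_into_blocks a v" by auto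
  have "length a \<le> length v" using splits_into_blocks_length[OF uv(3)] by simp
  with Cons.prems uv(1,2) have "length u = 1" "length v = length a"
    using block_length[OF uv(2)] by auto
  then obtain y r where "u = [(y, r)]" by (auto simp: length_Suc_conv)
  with Cons uv show ?case by (auto simp: block_def weight_def reds_def)
qed simp

lemma splits_into_blocks_black: "splits_into_blocks a (map (\<lambda>x. (x, False)) a)"
proof (induction a)
  case (Cons x a)
  have "block x [(x, False)]" by (simp add: block_def weight_def reds_def)
  with Cons.IH show ?case
    by (simp only: list.map splits_into_blocks.simps)
      (rule exI[of _ "[(x, False)]"], rule exI[of _ "map (\<lambda>x. (x, False)) a"], simp)
qed simp

lemma glide_count_diag: "glide_count a a 0 = 1"
proof -
  have "{w. splits_into_blocks a w \<and> map fst w = a \<and> reds w = 0} = {map (\<lambda>x. (x, False)) a}"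
  proof (intro equalityI subsetI)
    fix w assume "w \<in> {w. splits_into_blocks a w \<and> map fst w = a \<and> reds w = 0}"
    then show "w \<in> {map (\<lambda>x. (x, False)) a}"
      using splits_into_blocks_tight[of a w] by (auto dest: arg_cong[of _ _ length])
  qed (auto simp: splits_into_blocks_black reds_def comp_def)
  then show ?thesis by (simp add: glide_count_def)
qed

lemma glide_count_nonzero:
  assumes "glide_count a e k \<noteq> 0"
  obtains w where "splits_into_blocks a w" "map fst w = e" "reds w = k"
  using assms unfolding glide_count_def by (metis (mono_tags, lifting) card.empty empty_Collect_eq)

lemma glide_count_triangular:
  assumes "glide_count a e k \<noteq> 0"
  shows "(e = a \<and> k = 0) \<or> length a < length e"
proof -
  obtain w where w: "splits_into_blocks a w" "map fst w = e" "reds w = k"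
    using glide_count_nonzero[OF assms] .
  then have "length a + k \<le> length e" using splits_into_blocks_length[OF w(1)] by auto
  moreover have "e = a" if "k = 0" "length e = length a"
    using splits_into_blocks_tight[OF w(1)] w that by (auto simp: comp_def)
  ultimately show ?thesis by linarith
qed

lemma glide_count_nonzero_bounds:
  assumes "glide_count a e k \<noteq> 0"
  shows "k \<le> length e" "sum_list e = sum_list a + k"
proof -
  obtain w where w: "splits_into_blocks a w" "map fst w = e" "reds w = k"
    using glide_count_nonzero[OF assms] .
  show "k \<le> length e" using w by (auto simp: reds_def)
  show "sum_list e = sum_list a + k"
    using splits_into_blocks_weight[OF w(1)] w by (simp add: weight_def)
qed

section \<open>Quasisymmetry via exponent vectors\<close>

definition nz_indices :: "nat list \<Rightarrow> nat list" where
  "nz_indices b = filter (\<lambda>t. b ! t \<noteq> 0) [0..<length b]"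

lemma flat_eq_map_nth: "flat b = map (nth b) (nz_indices b)"
proof -
  have "flat b = filter (\<lambda>x. x \<noteq> 0) (map (\<lambda>t. b ! t) [0..<length b])"
    by (simp add: map_nth flat_def)
  then show ?thesis by (simp add: nz_indices_def filter_map comp_def)
qed

lemma sorted_nz_indices: "sorted_wrt (<) (nz_indices b)"
  unfolding nz_indices_def by (rule sorted_wrt_filter) simp

lemma set_nz_indices: "set (nz_indices b) = {t. t < length b \<and> b ! t \<noteq> 0}"
  unfolding nz_indices_def by auto

lemma length_nz_indices: "length (nz_indices b) = length (flat b)"
  by (simp add: flat_eq_map_nth)

lemma length_flat_le: "length (flat b) \<le> length b"
  by (simp add: flat_def)

lemma sum_list_flat: "sum_list (flat b) = sum_list b"
  by (induction b) (auto simp: flat_def)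

lemma composition_flat: "composition (flat b)"
  by (auto simp: composition_def flat_def)

lemma flat_positive: "x \<in> set (flat b) \<Longrightarrow> 0 < x"
  by (auto simp: flat_def)

lemma length_expvec [simp]: "length (expvec n i e) = n"
  by (simp add: expvec_def)

lemma nth_expvec_index:
  assumes "distinct i" "t < length i" "i ! t < n"
  shows "expvec n i e ! (i ! t) = e ! t"
proof -
  have "expvec n i e ! (i ! t) = (\<Sum>t'<length i. if i ! t' = i ! t then e ! t' else 0)"
    using assms by (simp add: expvec_def)
  also have "\<dots> = (\<Sum>t'<length i. if t' = t then e ! t' else 0)"
    by (rule sum.cong) (use assms in \<open>auto simp: nth_eq_iff_index_eq\<close>)
  finally show ?thesis using assms by simp
qed

lemma nth_expvec_other:
  assumes "m < n" "m \<notin> set i"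
  shows "expvec n i e ! m = 0"
  using assms by (auto simp: expvec_def in_set_conv_nth intro!: sum.neutral)

lemma expvec_nz_indices:
  assumes "length b = n"
  shows "expvec n (nz_indices b) (flat b) = b"
proof (rule nth_equalityI)
  fix m assume "m < length (expvec n (nz_indices b) (flat b))"
  then have m: "m < n" by simp
  show "expvec n (nz_indices b) (flat b) ! m = b ! m"
  proof (cases "b ! m = 0")
    case True
    then show ?thesis using nth_expvec_other[OF m] by (simp add: set_nz_indices)
  next
    case False
    then have "m \<in> set (nz_indices b)" using m assms by (simp add: set_nz_indices)
    then obtain t where t: "t < length (nz_indices b)" "nz_indices b ! t = m"
      by (auto simp: in_set_conv_nth)
    have "distinct (nz_indices b)" using sorted_nz_indices strict_sorted_iff by blast
    with t m show ?thesis using nth_expvec_index[of "nz_indices b" t n "flat b"]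
      by (simp add: flat_eq_map_nth)
  qed
qed (use assms in simp)

lemma nz_indices_expvec:
  assumes "sorted_wrt (<) i" "set i \<subseteq> {..<n}" "length i = length e" "\<forall>x\<in>set e. 0 < x"
  shows "nz_indices (expvec n i e) = i"
proof -
  have d: "distinct i" and s: "sorted i" using assms(1) strict_sorted_iff by blast+
  have "m \<in> set (nz_indices (expvec n i e)) \<longleftrightarrow> m \<in> set i" for m
  proof (cases "m \<in> set i")
    case True
    then obtain t where t: "t < length i" "i ! t = m" by (auto simp: in_set_conv_nth)
    moreover have "m < n" using t assms(2) nth_mem by blast
    ultimately have "expvec n i e ! m = e ! t" "m < n"
      using nth_expvec_index[OF d t(1)] by auto
    with t True assms(3,4) show ?thesis by (auto simp: set_nz_indices)
  qed (auto simp: set_nz_indices nth_expvec_other)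
  then show ?thesis
    using sorted_distinct_set_unique sorted_nz_indices strict_sorted_iff d s by blast
qed

lemma flat_expvec:
  assumes "sorted_wrt (<) i" "set i \<subseteq> {..<n}" "length i = length e" "\<forall>x\<in>set e. 0 < x"
  shows "flat (expvec n i e) = e"
proof (rule nth_equalityI)
  have d: "distinct i" using assms(1) strict_sorted_iff by blast
  fix t assume "t < length (flat (expvec n i e))"
  then have t: "t < length i" by (simp add: flat_eq_map_nth nz_indices_expvec[OF assms])
  then have "i ! t < n" using assms(2) nth_mem by blast
  with t show "flat (expvec n i e) ! t = e ! t"
    using nth_expvec_index[OF d t] by (simp add: flat_eq_map_nth nz_indices_expvec[OF assms])
qed (simp add: flat_eq_map_nth nz_indices_expvec[OF assms] assms(3))

lemma qsym_cond_iff_flat: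
  "qsym_cond n f \<longleftrightarrow> (\<forall>b b'. length b = n \<longrightarrow> length b' = n \<longrightarrow> flat b = flat b' \<longrightarrow> f b = f b')"
proof
  assume q: "qsym_cond n f"
  show "\<forall>b b'. length b = n \<longrightarrow> length b' = n \<longrightarrow> flat b = flat b' \<longrightarrow> f b = f b'"
  proof (intro allI impI)
    fix b b' assume b: "length b = n" and b': "length b' = n" and fl: "flat b = flat b'"
    have "f (expvec n (nz_indices b) (flat b)) = f (expvec n (nz_indices b') (flat b))"
      using q[unfolded qsym_cond_def, rule_format,
          where e = "flat b" and i = "nz_indices b" and j = "nz_indices b'"]
        b b' fl sorted_nz_indices flat_positive
      by (auto simp: length_nz_indices set_nz_indices)
    then show "f b = f b'" using expvec_nz_indices[OF b] expvec_nz_indices[OF b'] fl by simp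
  qed
next
  assume "\<forall>b b'. length b = n \<longrightarrow> length b' = n \<longrightarrow> flat b = flat b' \<longrightarrow> f b = f b'"
  then show "qsym_cond n f"
    unfolding qsym_cond_def using flat_expvec by (metis length_expvec)
qed

section \<open>Glides as block factorizations\<close>

definition colouring :: "nat list \<Rightarrow> bool list \<Rightarrow> bool" where
  "colouring b red \<longleftrightarrow> list_all2 (\<lambda>x r. r \<longrightarrow> 0 < x) b red"

definition coloured_word :: "nat list \<Rightarrow> bool list \<Rightarrow> (nat \<times> bool) list" where
  "coloured_word b red = filter (\<lambda>p. fst p \<noteq> 0) (zip b red)"

text \<open>The conditions in the definition of a glide of \<open>0^m a\<close>, with the entries of \<open>b\<close> and their
  colours given as functions \<open>B\<close> and \<open>R\<close> of the 1-indexed position.\<close>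
definition block_at :: "nat \<Rightarrow> nat \<Rightarrow> nat \<Rightarrow> (nat \<Rightarrow> nat) \<Rightarrow> (nat \<Rightarrow> bool) \<Rightarrow> bool" where
  "block_at x p q B R \<longleftrightarrow> (\<Sum>k\<in>{p<..q}. B k) = x + card {k\<in>{p<..q}. R k} \<and>
     (\<exists>m\<in>{p<..q}. B m \<noteq> 0 \<and> \<not> R m \<and> (\<forall>k\<in>{p<..<m}. B k = 0))"

definition glide_cuts ::
  "nat \<Rightarrow> nat list \<Rightarrow> (nat \<Rightarrow> nat) \<Rightarrow> (nat \<Rightarrow> bool) \<Rightarrow> (nat \<Rightarrow> nat) \<Rightarrow> bool" where
  "glide_cuts m a B R \<iota> \<longleftrightarrow> \<iota> 0 = 0 \<and> (\<forall>j<length a. \<iota> j < \<iota> (Suc j)) \<and>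
     (\<forall>j\<in>{1..length a}. \<iota> j \<le> m + j) \<and>
     (\<forall>k. \<iota> (length a) < k \<and> k \<le> m + length a \<longrightarrow> B k = 0) \<and>
     (\<forall>j\<in>{1..length a}. block_at (a ! (j - 1)) (\<iota> (j - 1)) (\<iota> j) B R)"

lemma colouring_iff:
  "colouring b red \<longleftrightarrow> length red = length b \<and> (\<forall>t<length b. red ! t \<longrightarrow> 0 < b ! t)"
  unfolding colouring_def list_all2_conv_all_nth by auto

lemma nzpos_replicate_composition:
  assumes "composition a"
  shows "nzpos (replicate m 0 @ a) = [Suc m..<Suc (m + length a)]"
proof -
  have "[1..<length (replicate m 0 @ a) + 1] = [1..<Suc m] @ [Suc m..<Suc (m + length a)]"
    using upt_add_eq_append[of 1 "Suc m" "length a"] by (simp del: upt_Suc)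
  moreover have "filter (\<lambda>k. (replicate m 0 @ a) ! (k - 1) \<noteq> 0) [1..<Suc m] = []"
    by (rule filter_False) (auto simp: nth_append)
  moreover have "filter (\<lambda>k. (replicate m 0 @ a) ! (k - 1) \<noteq> 0) [Suc m..<Suc (m + length a)]
      = [Suc m..<Suc (m + length a)]"
    by (rule filter_True) (use assms in \<open>auto simp: nth_append composition_def\<close>)
  ultimately show ?thesis unfolding nzpos_def by simp
qed

lemma flat_replicate_composition: "composition a \<Longrightarrow> flat (replicate m 0 @ a) = a"
  by (auto simp: flat_def composition_def intro: filter_True)

lemma glide_replicate_iff:
  assumes "composition a"
  shows "glide (replicate m 0 @ a) b red \<longleftrightarrow> length b = m + length a \<and> colouring b red \<and>
    (\<exists>\<iota>. glide_cuts m a (\<lambda>k. b ! (k - 1)) (\<lambda>k. red ! (k - 1)) \<iota>)"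
proof -
  have np: "nzpos (replicate m 0 @ a) = [Suc m..<Suc (m + length a)]"
    by (rule nzpos_replicate_composition[OF assms])
  then have ln: "length (nzpos (replicate m 0 @ a)) = length a" by (simp del: upt_Suc)
  have "(\<forall>j\<in>{1..length a}. \<iota> j \<le> nzpos (replicate m 0 @ a) ! (j - 1)) \<longleftrightarrow>
        (\<forall>j\<in>{1..length a}. \<iota> j \<le> m + j)" for \<iota>
    by (simp add: np del: upt_Suc)
  then show ?thesis
    unfolding glide_def glide_cuts_def block_at_def Let_def ln colouring_iff
      flat_replicate_composition[OF assms]
    by (simp add: ac_simps) (intro iffI; elim conjE exE; intro conjI; (assumption | blast | simp)?)
qed

lemma block_at_shift:
  "block_at x p q (\<lambda>k. B (s + k)) (\<lambda>k. R (s + k)) \<longleftrightarrow> block_at x (s + p) (s + q) B R"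
proof -
  have inj: "inj_on ((+) s) A" for A by simp
  have "(\<Sum>k\<in>{s + p<..s + q}. B k) = (\<Sum>k\<in>{p<..q}. B (s + k))"
    using sum.reindex[OF inj, of B "{p<..q}"] by (simp add: comp_def)
  moreover have "{k\<in>{s + p<..s + q}. R k} = (+) s ` {k\<in>{p<..q}. R (s + k)}"
  proof (intro equalityI subsetI)
    fix k assume "k \<in> {k\<in>{s + p<..s + q}. R k}"
    then show "k \<in> (+) s ` {k\<in>{p<..q}. R (s + k)}" by (intro image_eqI[of _ _ "k - s"]) auto
  qed auto
  then have "card {k\<in>{s + p<..s + q}. R k} = card {k\<in>{p<..q}. R (s + k)}"
    by (simp add: card_image)
  moreover have
    "(\<exists>m\<in>{s + p<..s + q}. B m \<noteq> 0 \<and> \<not> R m \<and> (\<forall>k\<in>{s + p<..<m}. B k = 0)) \<longleftrightarrow>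
     (\<exists>m\<in>{p<..q}. B (s + m) \<noteq> 0 \<and> \<not> R (s + m) \<and> (\<forall>k\<in>{p<..<m}. B (s + k) = 0))"
  proof
    assume "\<exists>m\<in>{s + p<..s + q}. B m \<noteq> 0 \<and> \<not> R m \<and> (\<forall>k\<in>{s + p<..<m}. B k = 0)"
    then obtain m where "m \<in> {s + p<..s + q}" "B m \<noteq> 0" "\<not> R m" "\<forall>k\<in>{s + p<..<m}. B k = 0"
      by blast
    then show "\<exists>m\<in>{p<..q}. B (s + m) \<noteq> 0 \<and> \<not> R (s + m) \<and> (\<forall>k\<in>{p<..<m}. B (s + k) = 0)"
      by (intro bexI[of _ "m - s"]) auto
  next
    assume "\<exists>m\<in>{p<..q}. B (s + m) \<noteq> 0 \<and> \<not> R (s + m) \<and> (\<forall>k\<in>{p<..<m}. B (s + k) = 0)"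
    then obtain m where m: "m \<in> {p<..q}" "B (s + m) \<noteq> 0" "\<not> R (s + m)"
      "\<forall>k\<in>{p<..<m}. B (s + k) = 0" by blast
    have "B k = 0" if "k \<in> {s + p<..<s + m}" for k
      using m(4)[rule_format, of "k - s"] that
      by (simp add: less_diff_conv less_diff_conv2 add.commute)
    with m show "\<exists>m\<in>{s + p<..s + q}. B m \<noteq> 0 \<and> \<not> R m \<and> (\<forall>k\<in>{s + p<..<m}. B k = 0)"
      by (intro bexI[of _ "s + m"]) auto
  qed
  ultimately show ?thesis unfolding block_at_def by simp
qed

lemma block_at_cong:
  assumes "\<And>k. p < k \<Longrightarrow> k \<le> q \<Longrightarrow> B k = B' k" "\<And>k. p < k \<Longrightarrow> k \<le> q \<Longrightarrow> R k = R' k"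
  shows "block_at x p q B R \<longleftrightarrow> block_at x p q B' R'"
proof -
  have "{k\<in>{p<..q}. R k} = {k\<in>{p<..q}. R' k}" using assms(2) by auto
  moreover have "(\<Sum>k\<in>{p<..q}. B k) = (\<Sum>k\<in>{p<..q}. B' k)" using assms(1) by simp
  moreover have "(\<exists>m\<in>{p<..q}. B m \<noteq> 0 \<and> \<not> R m \<and> (\<forall>k\<in>{p<..<m}. B k = 0)) \<longleftrightarrow>
     (\<exists>m\<in>{p<..q}. B' m \<noteq> 0 \<and> \<not> R' m \<and> (\<forall>k\<in>{p<..<m}. B' k = 0))"
    using assms by (intro bex_cong) auto
  ultimately show ?thesis unfolding block_at_def by simp
qed

lemma glide_cuts_cong:
  assumes "\<And>k. 0 < k \<Longrightarrow> B k = B' k" "\<And>k. 0 < k \<Longrightarrow> R k = R' k"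
  shows "glide_cuts m a B R \<iota> \<longleftrightarrow> glide_cuts m a B' R' \<iota>"
proof -
  have "block_at x p q B R \<longleftrightarrow> block_at x p q B' R'" for x p q
    using assms by (intro block_at_cong) auto
  then show ?thesis unfolding glide_cuts_def using assms by auto
qed

lemma glide_cuts_mono:
  assumes "glide_cuts m a B R \<iota>" "i \<le> j" "j \<le> length a"
  shows "\<iota> i \<le> \<iota> j"
  using assms(2,3)
proof (induction j rule: dec_induct)
  case (step j)
  then have "\<iota> j < \<iota> (Suc j)" using assms(1) unfolding glide_cuts_def by simp
  with step show ?case by simp
qed simp

lemma glide_cuts_ConsD:
  assumes cuts: "glide_cuts m (x # a) B R \<iota>"
  shows "0 < \<iota> 1 \<and> \<iota> 1 \<le> Suc m \<and> block_at x 0 (\<iota> 1) B R \<and>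
    glide_cuts (Suc m - \<iota> 1) a (\<lambda>k. B (\<iota> 1 + k)) (\<lambda>k. R (\<iota> 1 + k)) (\<lambda>j. \<iota> (Suc j) - \<iota> 1)"
proof -
  let ?s = "\<iota> 1"
  have s_le: "?s \<le> \<iota> j" if "1 \<le> j" "j \<le> Suc (length a)" for j
    using glide_cuts_mono[OF cuts, of 1 j] that by simp
  have shifted: "?s + (\<iota> j - ?s) = \<iota> j" if "1 \<le> j" "j \<le> Suc (length a)" for j
    using s_le[OF that] by simp
  have step: "\<iota> j < \<iota> (Suc j)" if "j \<le> length a" for j
    using cuts that unfolding glide_cuts_def by simp
  have ub: "\<iota> j \<le> m + j" if "1 \<le> j" "j \<le> Suc (length a)" for j
    using cuts that unfolding glide_cuts_def by simp
  have blocks: "block_at ((x # a) ! (j - 1)) (\<iota> (j - 1)) (\<iota> j) B R"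
    if "1 \<le> j" "j \<le> Suc (length a)" for j
    using cuts that unfolding glide_cuts_def by simp
  have "glide_cuts (Suc m - ?s) a (\<lambda>k. B (?s + k)) (\<lambda>k. R (?s + k)) (\<lambda>j. \<iota> (Suc j) - ?s)"
    unfolding glide_cuts_def
  proof (intro conjI allI impI ballI)
    fix j assume "j < length a"
    then show "\<iota> (Suc j) - ?s < \<iota> (Suc (Suc j)) - ?s"
      using step[of "Suc j"] s_le[of "Suc j"] by simp
  next
    fix j assume "j \<in> {1..length a}"
    then show "\<iota> (Suc j) - ?s \<le> Suc m - ?s + j" using ub[of "Suc j"] ub[of 1] by auto
  next
    fix k assume k: "\<iota> (Suc (length a)) - ?s < k \<and> k \<le> Suc m - ?s + length a"
    then show "B (?s + k) = 0"
      using cuts ub[of 1] shifted[of "Suc (length a)"] unfolding glide_cuts_def by auto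
  next
    fix j assume j: "j \<in> {1..length a}"
    then show "block_at (a ! (j - 1)) (\<iota> (Suc (j - 1)) - ?s) (\<iota> (Suc j) - ?s)
        (\<lambda>k. B (?s + k)) (\<lambda>k. R (?s + k))"
      using blocks[of "Suc j"] shifted[of j] shifted[of "Suc j"] by (simp add: block_at_shift)
  qed (simp add: cuts)
  moreover have "0 < ?s" using step[of 0] cuts unfolding glide_cuts_def by simp
  ultimately show ?thesis using ub[of 1] blocks[of 1] cuts unfolding glide_cuts_def by simp
qed

lemma glide_cuts_ConsI:
  assumes s: "0 < s" "s \<le> Suc m" and blk: "block_at x 0 s B R"
    and cuts: "glide_cuts (Suc m - s) a (\<lambda>k. B (s + k)) (\<lambda>k. R (s + k)) \<iota>"
  shows "glide_cuts m (x # a) B R (\<lambda>j. if j = 0 then 0 else s + \<iota> (j - 1))"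
  unfolding glide_cuts_def
proof (intro conjI allI impI ballI)
  fix j assume "j < length (x # a)"
  then show "(if j = 0 then 0 else s + \<iota> (j - 1)) < (if Suc j = 0 then 0 else s + \<iota> (Suc j - 1))"
    using s cuts unfolding glide_cuts_def by (cases j) auto
next
  fix j assume j: "j \<in> {1..length (x # a)}"
  show "(if j = 0 then 0 else s + \<iota> (j - 1)) \<le> m + j"
  proof (cases "j = 1")
    case False
    with j have "j - 1 \<in> {1..length a}" by auto
    then have "\<iota> (j - 1) \<le> Suc m - s + (j - 1)"
      using cuts unfolding glide_cuts_def by blast
    with j s show ?thesis by auto
  qed (use s cuts in \<open>simp add: glide_cuts_def\<close>)
next
  fix k assume "(if length (x # a) = 0 then 0 else s + \<iota> (length (x # a) - 1)) < k \<and>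
    k \<le> m + length (x # a)"
  then show "B k = 0"
    using s cuts unfolding glide_cuts_def by (auto dest!: spec[of _ "k - s"])
next
  fix j assume j: "j \<in> {1..length (x # a)}"
  show "block_at ((x # a) ! (j - 1)) (if j - 1 = 0 then 0 else s + \<iota> (j - 1 - 1))
      (if j = 0 then 0 else s + \<iota> (j - 1)) B R"
  proof (cases "j = 1")
    case True
    then show ?thesis using blk cuts unfolding glide_cuts_def by simp
  next
    case False
    with j have "block_at (a ! (j - 2)) (\<iota> (j - 2)) (\<iota> (j - 1)) (\<lambda>k. B (s + k)) (\<lambda>k. R (s + k))"
      using cuts unfolding glide_cuts_def
      by (auto dest!: bspec[of _ _ "j - 1"] simp: numeral_2_eq_2)
    with False j show ?thesis
      using cuts unfolding glide_cuts_def block_at_shift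
      by (cases j) (auto simp: numeral_2_eq_2)
  qed
qed simp

lemma glide_cuts_Cons_iff:
  "(\<exists>\<iota>. glide_cuts m (x # a) B R \<iota>) \<longleftrightarrow>
    (\<exists>s. 0 < s \<and> s \<le> Suc m \<and> block_at x 0 s B R \<and>
       (\<exists>\<iota>. glide_cuts (Suc m - s) a (\<lambda>k. B (s + k)) (\<lambda>k. R (s + k)) \<iota>))"
proof
  assume "\<exists>\<iota>. glide_cuts m (x # a) B R \<iota>"
  then obtain \<iota> where "glide_cuts m (x # a) B R \<iota>" ..
  from glide_cuts_ConsD[OF this] show "\<exists>s. 0 < s \<and> s \<le> Suc m \<and> block_at x 0 s B R \<and>
       (\<exists>\<iota>. glide_cuts (Suc m - s) a (\<lambda>k. B (s + k)) (\<lambda>k. R (s + k)) \<iota>)"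
    by blast
next
  assume "\<exists>s. 0 < s \<and> s \<le> Suc m \<and> block_at x 0 s B R \<and>
       (\<exists>\<iota>. glide_cuts (Suc m - s) a (\<lambda>k. B (s + k)) (\<lambda>k. R (s + k)) \<iota>)"
  then obtain s \<iota> where "0 < s" "s \<le> Suc m" "block_at x 0 s B R"
    "glide_cuts (Suc m - s) a (\<lambda>k. B (s + k)) (\<lambda>k. R (s + k)) \<iota>" by blast
  from glide_cuts_ConsI[OF this] show "\<exists>\<iota>. glide_cuts m (x # a) B R \<iota>" by blast
qed

lemma coloured_word_Nil [simp]: "coloured_word [] red = []"
  by (simp add: coloured_word_def)

lemma coloured_word_Cons [simp]:
  "coloured_word (x # b) (r # red) =
    (if x = 0 then coloured_word b red else (x, r) # coloured_word b red)"
  by (simp add: coloured_word_def)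

lemma coloured_word_take_drop:
  "coloured_word b red =
    coloured_word (take s b) (take s red) @ coloured_word (drop s b) (drop s red)"
  unfolding coloured_word_def
  by (simp add: take_zip[symmetric] drop_zip[symmetric] filter_append[symmetric])

lemma colouring_take_drop:
  "colouring b red \<Longrightarrow> colouring (take s b) (take s red) \<and> colouring (drop s b) (drop s red)"
  unfolding colouring_def by simp

lemma map_fst_coloured_word: "length b = length red \<Longrightarrow> map fst (coloured_word b red) = flat b"
  by (induction b red rule: list_induct2) (auto simp: flat_def)

lemma weight_coloured_word: "length b = length red \<Longrightarrow> weight (coloured_word b red) = sum_list b"
  by (induction b red rule: list_induct2) (auto simp: weight_def)

lemma reds_coloured_word: "colouring b red \<Longrightarrow> reds (coloured_word b red) = ex red"
  unfolding colouring_def by (induction rule: list_all2_induct) (auto simp: reds_def ex_def)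

lemma coloured_word_eq_Nil_iff:
  "length b = length red \<Longrightarrow> coloured_word b red = [] \<longleftrightarrow> (\<forall>t<length b. b ! t = 0)"
  by (induction b red rule: list_induct2) (auto simp: All_less_Suc2)

lemma coloured_word_first_black_iff:
  "length b = length red \<Longrightarrow> (\<exists>t<length b. b ! t \<noteq> 0 \<and> \<not> red ! t \<and> (\<forall>t'<t. b ! t' = 0))
    \<longleftrightarrow> coloured_word b red \<noteq> [] \<and> \<not> snd (hd (coloured_word b red))"
  by (induction b red rule: list_induct2) (auto simp: Ex_less_Suc2 All_less_Suc2)

lemma block_at_iff_block:
  assumes "colouring b red"
  shows "block_at x 0 (length b) (\<lambda>k. b ! (k - 1)) (\<lambda>k. red ! (k - 1)) \<longleftrightarrow>
    block x (coloured_word b red)"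
proof -
  let ?n = "length b"
  have len: "length red = ?n" using assms by (simp add: colouring_iff)
  have pos: "{0<..?n} = Suc ` {..<?n}"
    by (simp add: image_Suc_lessThan atLeastSucAtMost_greaterThanAtMost)
  have "(\<Sum>k\<in>{0<..?n}. b ! (k - 1)) = sum_list b"
    by (simp add: pos sum.reindex sum_list_sum_nth atLeast0LessThan)
  moreover have "{k\<in>{0<..?n}. red ! (k - 1)} = Suc ` {t. t < length red \<and> red ! t}"
    using len by (auto simp: pos)
  then have "card {k\<in>{0<..?n}. red ! (k - 1)} = ex red"
    by (simp add: card_image ex_def length_filter_conv_card)
  moreover have
    "(\<exists>m\<in>{0<..?n}. b ! (m - 1) \<noteq> 0 \<and> \<not> red ! (m - 1) \<and> (\<forall>k\<in>{0<..<m}. b ! (k - 1) = 0)) \<longleftrightarrow>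
     (\<exists>t<?n. b ! t \<noteq> 0 \<and> \<not> red ! t \<and> (\<forall>t'<t. b ! t' = 0))"
  proof
    assume "\<exists>m\<in>{0<..?n}. b ! (m - 1) \<noteq> 0 \<and> \<not> red ! (m - 1) \<and> (\<forall>k\<in>{0<..<m}. b ! (k - 1) = 0)"
    then obtain t where t: "t < ?n" "b ! t \<noteq> 0" "\<not> red ! t" "\<forall>k\<in>{0<..<Suc t}. b ! (k - 1) = 0"
      by (auto simp: pos)
    have "b ! t' = 0" if "t' < t" for t'
      using t(4)[rule_format, of "Suc t'"] that by simp
    with t show "\<exists>t<?n. b ! t \<noteq> 0 \<and> \<not> red ! t \<and> (\<forall>t'<t. b ! t' = 0)" by blast
  next
    assume "\<exists>t<?n. b ! t \<noteq> 0 \<and> \<not> red ! t \<and> (\<forall>t'<t. b ! t' = 0)"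
    then obtain t where t: "t < ?n" "b ! t \<noteq> 0" "\<not> red ! t" "\<forall>t'<t. b ! t' = 0" by blast
    then have "\<forall>k\<in>{0<..<Suc t}. b ! (k - 1) = 0" by auto
    with t show "\<exists>m\<in>{0<..?n}. b ! (m - 1) \<noteq> 0 \<and> \<not> red ! (m - 1) \<and> (\<forall>k\<in>{0<..<m}. b ! (k - 1) = 0)"
      by (intro bexI[of _ "Suc t"]) auto
  qed
  ultimately show ?thesis
    unfolding block_at_def block_def coloured_word_first_black_iff[OF len[symmetric]]
      weight_coloured_word[OF len[symmetric]] reds_coloured_word[OF assms]
    by auto
qed

lemma filter_eq_append_split:
  "filter P xs = u @ v \<Longrightarrow> \<exists>s\<le>length xs. filter P (take s xs) = u \<and> filter P (drop s xs) = v"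
proof (induction xs arbitrary: u)
  case (Cons x xs)
  show ?case
  proof (cases "u = []")
    case True
    with Cons.prems show ?thesis by (intro exI[of _ 0]) simp
  next
    case False
    with Cons.prems obtain u' where "filter P xs = u' @ v" "u = (if P x then x # u' else u')"
      by (cases "P x") (auto simp: Cons_eq_append_conv)
    with Cons.IH show ?thesis by (force intro: exI[of _ "Suc _"])
  qed
qed simp

lemma splits_into_blocks_Cons_coloured_word:
  "splits_into_blocks (x # a) (coloured_word b red) \<longleftrightarrow>
    (\<exists>s\<le>length b. block x (coloured_word (take s b) (take s red)) \<and>
       splits_into_blocks a (coloured_word (drop s b) (drop s red)))"
proof
  assume "splits_into_blocks (x # a) (coloured_word b red)"
  then obtain u v where uv: "coloured_word b red = u @ v" "block x u" "splits_into_blocks a v"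
    by auto
  then obtain s where "s \<le> length (zip b red)" "coloured_word (take s b) (take s red) = u"
    "coloured_word (drop s b) (drop s red) = v"
    using filter_eq_append_split[of _ "zip b red" u v]
    unfolding coloured_word_def by (auto simp: take_zip drop_zip)
  with uv show "\<exists>s\<le>length b. block x (coloured_word (take s b) (take s red)) \<and>
       splits_into_blocks a (coloured_word (drop s b) (drop s red))"
    by auto
next
  assume "\<exists>s\<le>length b. block x (coloured_word (take s b) (take s red)) \<and>
       splits_into_blocks a (coloured_word (drop s b) (drop s red))"
  then obtain s where "block x (coloured_word (take s b) (take s red))"
    "splits_into_blocks a (coloured_word (drop s b) (drop s red))" by blast
  then show "splits_into_blocks (x # a) (coloured_word b red)"
    unfolding splits_into_blocks.simps coloured_word_take_drop[of b red s] by blast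
qed

lemma splits_into_blocks_Cons_first_cut:
  assumes "length b = m + length (x # a)"
  shows "splits_into_blocks (x # a) (coloured_word b red) \<longleftrightarrow>
    (\<exists>s. 0 < s \<and> s \<le> Suc m \<and> block x (coloured_word (take s b) (take s red)) \<and>
       splits_into_blocks a (coloured_word (drop s b) (drop s red)))"
proof -
  have "0 < s \<and> s \<le> Suc m" if "s \<le> length b" "block x (coloured_word (take s b) (take s red))"
    "splits_into_blocks a (coloured_word (drop s b) (drop s red))" for s
  proof
    show "0 < s" using that(2) by (cases s) (auto simp: block_def)
    have "length a \<le> length (coloured_word (drop s b) (drop s red))"
      using splits_into_blocks_length[OF that(3)] by simp
    also have "\<dots> \<le> length b - s"
      unfolding coloured_word_def by (rule order_trans[OF length_filter_le]) simp
    finally show "s \<le> Suc m" using assms that(1) by simp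
  qed
  moreover have "s \<le> length b" if "s \<le> Suc m" for s using that assms by simp
  ultimately show ?thesis
    unfolding splits_into_blocks_Cons_coloured_word by blast
qed

lemma block_at_prefix_iff:
  assumes "colouring b red" "s \<le> length b"
  shows "block_at x 0 s (\<lambda>k. b ! (k - 1)) (\<lambda>k. red ! (k - 1)) \<longleftrightarrow>
    block x (coloured_word (take s b) (take s red))"
proof -
  have "length red = length b" using assms(1) by (simp add: colouring_iff)
  with assms have "block_at x 0 s (\<lambda>k. b ! (k - 1)) (\<lambda>k. red ! (k - 1)) \<longleftrightarrow>
      block_at x 0 s (\<lambda>k. take s b ! (k - 1)) (\<lambda>k. take s red ! (k - 1))"
    by (intro block_at_cong) auto
  then show ?thesis
    using block_at_iff_block[of "take s b" "take s red" x] colouring_take_drop[OF assms(1)] assms(2)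
    by (simp add: min_absorb2)
qed

lemma glide_cuts_iff_splits_into_blocks:
  assumes "length b = m + length a" "colouring b red"
  shows "(\<exists>\<iota>. glide_cuts m a (\<lambda>k. b ! (k - 1)) (\<lambda>k. red ! (k - 1)) \<iota>) \<longleftrightarrow>
    splits_into_blocks a (coloured_word b red)"
  using assms
proof (induction a arbitrary: m b red)
  case Nil
  have "(\<exists>\<iota>. glide_cuts m [] (\<lambda>k. b ! (k - 1)) (\<lambda>k. red ! (k - 1)) \<iota>) \<longleftrightarrow>
      (\<forall>k. 0 < k \<and> k \<le> length b \<longrightarrow> b ! (k - 1) = 0)"
    using Nil.prems(1) unfolding glide_cuts_def by (auto intro: exI[of _ "\<lambda>_. 0"])
  also have "\<dots> \<longleftrightarrow> (\<forall>t<length b. b ! t = 0)"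
  proof (intro iffI allI impI)
    fix t assume "\<forall>k. 0 < k \<and> k \<le> length b \<longrightarrow> b ! (k - 1) = 0" "t < length b"
    then show "b ! t = 0" by (auto dest: spec[of _ "Suc t"])
  qed (metis One_nat_def Suc_le_lessD Suc_pred)
  finally show ?case using Nil.prems by (simp add: coloured_word_eq_Nil_iff colouring_iff)
next
  case (Cons x a)
  have len: "length red = length b" using Cons.prems(2) by (simp add: colouring_iff)
  have tail: "(\<exists>\<iota>. glide_cuts (Suc m - s) a (\<lambda>k. b ! (s + k - 1)) (\<lambda>k. red ! (s + k - 1)) \<iota>) \<longleftrightarrow>
      splits_into_blocks a (coloured_word (drop s b) (drop s red))" if "s \<le> Suc m" for s
  proof -
    have "glide_cuts (Suc m - s) a (\<lambda>k. b ! (s + k - 1)) (\<lambda>k. red ! (s + k - 1)) \<iota> \<longleftrightarrow>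
        glide_cuts (Suc m - s) a (\<lambda>k. drop s b ! (k - 1)) (\<lambda>k. drop s red ! (k - 1)) \<iota>" for \<iota>
      using that Cons.prems(1) len by (intro glide_cuts_cong) auto
    then show ?thesis
      using Cons.IH[of "drop s b" "Suc m - s"] that Cons.prems colouring_take_drop by auto
  qed
  have first_cut: "splits_into_blocks (x # a) (coloured_word b red) \<longleftrightarrow>
      (\<exists>s. 0 < s \<and> s \<le> Suc m \<and> block x (coloured_word (take s b) (take s red)) \<and>
         splits_into_blocks a (coloured_word (drop s b) (drop s red)))"
    using splits_into_blocks_Cons_first_cut Cons.prems(1) by simp
  have "(0 < s \<and> s \<le> Suc m \<and> block_at x 0 s (\<lambda>k. b ! (k - 1)) (\<lambda>k. red ! (k - 1)) \<and>
      (\<exists>\<iota>. glide_cuts (Suc m - s) a (\<lambda>k. b ! (s + k - 1)) (\<lambda>k. red ! (s + k - 1)) \<iota>)) \<longleftrightarrow>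
     (0 < s \<and> s \<le> Suc m \<and> block x (coloured_word (take s b) (take s red)) \<and>
      splits_into_blocks a (coloured_word (drop s b) (drop s red)))" for s
    using tail[of s] block_at_prefix_iff[OF Cons.prems(2), of s x] Cons.prems(1) by auto
  then show ?case unfolding glide_cuts_Cons_iff first_cut by simp
qed

text \<open>Inverse of \<open>coloured_word b\<close>.\<close>
fun recolour :: "nat list \<Rightarrow> (nat \<times> bool) list \<Rightarrow> bool list" where
  "recolour [] w = []"
| "recolour (x # b) w = (if x = 0 then False # recolour b w else snd (hd w) # recolour b (tl w))"

lemma recolour_coloured_word: "colouring b red \<Longrightarrow> recolour b (coloured_word b red) = red"
  unfolding colouring_def by (induction rule: list_all2_induct) auto

lemma coloured_word_recolour:
  "map fst w = flat b \<Longrightarrow> coloured_word b (recolour b w) = w \<and> colouring b (recolour b w)"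
proof (induction b arbitrary: w)
  case (Cons x b)
  show ?case
  proof (cases "x = 0")
    case False
    with Cons.prems obtain r w' where "w = (x, r) # w'" "map fst w' = flat b"
      by (cases w) (auto simp: flat_def)
    with Cons.IH False show ?thesis by (simp add: colouring_def)
  qed (use Cons in \<open>simp_all add: flat_def colouring_def\<close>)
qed (simp add: flat_def colouring_def)

lemma glide_iff_splits_into_blocks:
  assumes "composition a" "length a \<le> n"
  shows "glide (replicate (n - length a) 0 @ a) b red \<longleftrightarrow>
    length b = n \<and> colouring b red \<and> splits_into_blocks a (coloured_word b red)"
proof (cases "length b = n")
  case True
  with assms(2) have "length b = n - length a + length a" by simp
  then show ?thesis
    using glide_replicate_iff[OF assms(1)] True
      glide_cuts_iff_splits_into_blocks[of b "n - length a" a red] by auto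
qed (use glide_replicate_iff[OF assms(1)] assms(2) in auto)

lemma Gb_eq_glide_count:
  assumes "composition a" "length a \<le> n"
  shows "Gb n a (k, b) = (if length b = n then int (glide_count a (flat b) k) else 0)"
proof -
  let ?C = "{red. colouring b red \<and> splits_into_blocks a (coloured_word b red) \<and> ex red = k}"
  have "Gb n a (k, b) = int (card {red. length b = n \<and> red \<in> ?C})"
    unfolding Gb_def calG_def using glide_iff_splits_into_blocks[OF assms] by simp
  moreover have "bij_betw (coloured_word b) ?C
      {w. splits_into_blocks a w \<and> map fst w = flat b \<and> reds w = k}"
  proof (rule bij_betw_byWitness[where f' = "recolour b"])
    show "coloured_word b ` ?C \<subseteq> {w. splits_into_blocks a w \<and> map fst w = flat b \<and> reds w = k}"
      by (auto simp: colouring_iff map_fst_coloured_word reds_coloured_word)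
    show "recolour b ` {w. splits_into_blocks a w \<and> map fst w = flat b \<and> reds w = k} \<subseteq> ?C"
      using coloured_word_recolour by (force simp: reds_coloured_word[symmetric])
  qed (auto simp: recolour_coloured_word coloured_word_recolour)
  ultimately show ?thesis by (simp add: bij_betw_same_card glide_count_def)
qed

lemma finite_support_Gb:
  assumes "composition a" "length a \<le> n"
  shows "finite {m. Gb n a m \<noteq> 0}"
proof (rule finite_subset)
  show "{m. Gb n a m \<noteq> 0} \<subseteq> {..n} \<times> {b. set b \<subseteq> {..sum_list a + n} \<and> length b = n}"
  proof clarify
    fix k b assume "Gb n a (k, b) \<noteq> 0"
    then have lb: "length b = n" and nz: "glide_count a (flat b) k \<noteq> 0"
      using Gb_eq_glide_count[OF assms] by (auto split: if_splits)
    have "length (flat b) \<le> n" using lb length_flat_le by metis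
    then have "k \<le> n" "sum_list b \<le> sum_list a + n"
      using glide_count_nonzero_bounds[OF nz] by (auto simp: sum_list_flat)
    moreover have "x \<le> sum_list b" if "x \<in> set b" for x
      using member_le_sum_list[OF that] by simp
    ultimately show "k \<in> {..n} \<and> b \<in> {b. set b \<subseteq> {..sum_list a + n} \<and> length b = n}"
      using lb by fastforce
  qed
  show "finite ({..n} \<times> {b. set b \<subseteq> {..sum_list a + n} \<and> length b = n})"
    using finite_lists_length_eq[of "{..sum_list a + n}" n] by simp
qed

lemma QSymB_eq: "QSymB n = fibre_constant_fns {m. length (snd m) = n} (\<lambda>(k, b). (k, flat b))"
proof -
  have "(\<forall>k b. p (k, b) \<noteq> 0 \<longrightarrow> length b = n) \<longleftrightarrow> (\<forall>m. p m \<noteq> 0 \<longrightarrow> m \<in> {m. length (snd m) = n})"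
    for p :: bpoly by auto
  moreover have "(\<forall>k. qsym_cond n (\<lambda>b. p (k, b))) \<longleftrightarrow>
      (\<forall>m\<in>{m. length (snd m) = n}. \<forall>m'\<in>{m. length (snd m) = n}.
         (case m of (k, b) \<Rightarrow> (k, flat b)) = (case m' of (k, b) \<Rightarrow> (k, flat b)) \<longrightarrow> p m = p m')"
    for p :: bpoly unfolding qsym_cond_iff_flat by (simp add: split_paired_all)
  ultimately show ?thesis unfolding QSymB_def fibre_constant_fns_def by simp
qed

lemma QSym_eq: "QSym n = fibre_constant_fns {b. length b = n} flat"
  unfolding QSym_def fibre_constant_fns_def qsym_cond_iff_flat by auto

section \<open>The glide bases\<close>

lemma beta_pow_mult_Gb:
  assumes "composition a" "length a \<le> n"
  shows "beta_pow_mult k (Gb n a) (k', b) =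
    (if k \<le> k' \<and> length b = n then int (glide_count a (flat b) (k' - k)) else 0)"
  using Gb_eq_glide_count[OF assms] by (simp add: beta_pow_mult_def)

lemma Z_basis_beta_Gb:
  "Z_basis {(k, a). composition a \<and> length a \<le> n} (\<lambda>(k, a). beta_pow_mult k (Gb n a)) (QSymB n)"
proof -
  have fin: "finite {m. beta_pow_mult k (Gb n a) m \<noteq> 0}"
    if "composition a" "length a \<le> n" for k a
  proof (rule finite_subset)
    show "{m. beta_pow_mult k (Gb n a) m \<noteq> 0} \<subseteq> (\<lambda>(k', b). (k' + k, b)) ` {m. Gb n a m \<noteq> 0}"
      by (force simp: beta_pow_mult_def image_iff split: if_splits)
  qed (use finite_support_Gb[OF that] in simp)
  interpret unitriangular_family "{(k, a). composition a \<and> length a \<le> n}"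
    "\<lambda>(k, a). beta_pow_mult k (Gb n a)" "{m. length (snd m) = n}" "\<lambda>(k, b). (k, flat b)"
    "\<lambda>(k, a). length a" "\<lambda>(k, a). (k, replicate (n - length a) 0 @ a)" n
  proof (unfold_locales; clarsimp)
    fix b :: "nat list"
    show "composition (flat b) \<and> length (flat b) \<le> length b"
      using composition_flat length_flat_le by blast
  next
    fix k :: nat and a :: "nat list" assume "composition a" "length a \<le> n"
    then show "beta_pow_mult k (Gb n a) \<in>
        fibre_constant_fns {m. length (snd m) = n} (\<lambda>(k, b). (k, flat b))"
      unfolding fibre_constant_fns_def using fin beta_pow_mult_Gb by (auto split: if_splits)
  next
    fix k :: nat and a :: "nat list" assume "composition a" "length a \<le> n"
    then show "beta_pow_mult k (Gb n a) (k, replicate (n - length a) 0 @ a) = 1"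
      by (simp add: beta_pow_mult_Gb flat_replicate_composition glide_count_diag)
  next
    fix k k' :: nat and a b :: "nat list" assume a: "composition a" "length a \<le> n"
      and nz: "beta_pow_mult k (Gb n a) (k', b) \<noteq> 0" and short: "\<not> length a < length (flat b)"
    from a nz have "k \<le> k'" "glide_count a (flat b) (k' - k) \<noteq> 0"
      by (auto simp: beta_pow_mult_Gb split: if_splits)
    with short show "k' = k \<and> flat b = a" using glide_count_triangular by fastforce
  qed (simp add: flat_replicate_composition)
  show ?thesis using Z_basis by (simp add: QSymB_eq)
qed

definition signed_glide_count :: "nat list \<Rightarrow> nat list \<Rightarrow> int" where
  "signed_glide_count a e = (\<Sum>k\<in>{k. glide_count a e k \<noteq> 0}. (-1) ^ k * int (glide_count a e k))"

lemma signed_glide_count_diag: "signed_glide_count a a = 1"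
proof -
  have "{k. glide_count a a k \<noteq> 0} = {0}"
    using glide_count_diag glide_count_triangular by fastforce
  then show ?thesis by (simp add: signed_glide_count_def glide_count_diag)
qed

lemma signed_glide_count_nonzero:
  "signed_glide_count a e \<noteq> 0 \<Longrightarrow> \<exists>k. glide_count a e k \<noteq> 0"
proof (rule ccontr)
  assume "signed_glide_count a e \<noteq> 0" "\<nexists>k. glide_count a e k \<noteq> 0"
  then show False unfolding signed_glide_count_def by simp
qed

lemma spec_neg1_Gb:
  assumes "composition a" "length a \<le> n"
  shows "spec_neg1 (Gb n a) b = (if length b = n then signed_glide_count a (flat b) else 0)"
  using Gb_eq_glide_count[OF assms] by (simp add: spec_neg1_def signed_glide_count_def)

lemma Z_basis_neg1_Gb:
  "Z_basis {a. composition a \<and> length a \<le> n} (\<lambda>a. spec_neg1 (Gb n a)) (QSym n)"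
proof -
  have fin: "finite {b. spec_neg1 (Gb n a) b \<noteq> 0}" if a: "composition a" "length a \<le> n" for a
  proof (rule finite_subset)
    show "{b. spec_neg1 (Gb n a) b \<noteq> 0} \<subseteq> snd ` {m. Gb n a m \<noteq> 0}"
    proof
      fix b assume "b \<in> {b. spec_neg1 (Gb n a) b \<noteq> 0}"
      then have "length b = n" "signed_glide_count a (flat b) \<noteq> 0"
        using spec_neg1_Gb[OF a] by (auto split: if_splits)
      then obtain k where "Gb n a (k, b) \<noteq> 0"
        using signed_glide_count_nonzero Gb_eq_glide_count[OF a] by fastforce
      then show "b \<in> snd ` {m. Gb n a m \<noteq> 0}" by force
    qed
  qed (use finite_support_Gb[OF that] in simp)
  interpret unitriangular_family "{a. composition a \<and> length a \<le> n}" "\<lambda>a. spec_neg1 (Gb n a)"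
    "{b. length b = n}" flat length "\<lambda>a. replicate (n - length a) 0 @ a" n
  proof (unfold_locales; clarsimp)
    fix b :: "nat list"
    show "composition (flat b) \<and> length (flat b) \<le> length b"
      using composition_flat length_flat_le by blast
  next
    fix a :: "nat list" assume "composition a" "length a \<le> n"
    then show "spec_neg1 (Gb n a) \<in> fibre_constant_fns {b. length b = n} flat"
      unfolding fibre_constant_fns_def using fin spec_neg1_Gb by (auto split: if_splits)
  next
    fix a :: "nat list" assume "composition a" "length a \<le> n"
    then show "spec_neg1 (Gb n a) (replicate (n - length a) 0 @ a) = 1"
      by (simp add: spec_neg1_Gb flat_replicate_composition signed_glide_count_diag)
  next
    fix a b :: "nat list" assume a: "composition a" "length a \<le> n"
      and nz: "spec_neg1 (Gb n a) b \<noteq> 0" and ne: "flat b \<noteq> a"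
    from a nz obtain k where "glide_count a (flat b) k \<noteq> 0"
      using signed_glide_count_nonzero by (auto simp: spec_neg1_Gb split: if_splits)
    with ne show "length a < length (flat b)" using glide_count_triangular by blast
  qed (simp add: flat_replicate_composition)
  show ?thesis using Z_basis by (simp add: QSym_eq)
qed

theorem mainTheorem10:
  fixes n :: nat
  shows "Z_basis {(k, a). composition a \<and> length a \<le> n}
            (\<lambda>(k, a). beta_pow_mult k (Gb n a)) (QSymB n)
       \<and> Z_basis {a. composition a \<and> length a \<le> n}
            (\<lambda>a. spec_neg1 (Gb n a)) (QSym n)"
  using Z_basis_beta_Gb Z_basis_neg1_Gb by blast

end
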